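(* Let $d,K\ge 2$ be integers and let $a^\dagger\in\{1,\dots,K\}$ be a distinguished arm. For each arm $a$, let $\hat\theta_a\in\mathbb{R}^d$, let $\widetilde V_{a}\in\mathbb{R}^{d\times d}$ be symmetric positive definite, let $\beta_a>0$, and define the ellipsoid $$\widetilde{\mathcal C}_{a}=\{\theta\in\mathbb{R}^d:\ \|\theta-\hat\theta_a\|_{\widetilde V_a}\le \beta_a\}.$$ Fix $x^\dagger\in\mathbb{R}^d$ and $\xi>0$. Consider the optimization problem $$\min_{y\in\mathbb{R}^d}\ \|y\|_2\quad\text{s.t.}\quad \max_{\theta\in\widetilde{\mathcal C}_{a}}\langle x^\dagger+y,\theta\rangle+\xi\le \max_{\theta\in\widetilde{\mathcal C}_{a^\dagger}}\langle x^\dagger+y,\theta\rangle\ \text{ for all } a\neq a^\dagger .$$ Then this problem is feasible (i.e. some $y\in\mathbb{R}^d$ satisfies the constraints) if and only if $$\exists\,\theta\in\widetilde{\mathcal C}_{a^\dagger}\ \text{ such that }\ \theta\notin\mathrm{Conv}\Big(\bigcup_{a\neq a^\dagger}\widetilde{\mathcal C}_{a}\Big).$$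
   Context: $\|x\|_V=\sqrt{x^\top V x}$ for a positive definite matrix $V$; $\mathrm{Conv}$ denotes the convex hull. In the paper these ellipsoids are the confidence sets maintained by the LinUCB algorithm at a given time $t$ (with $\hat\theta_a$ the regularized least-squares estimate, $\widetilde V_a$ the design matrix built from the contexts the algorithm actually observed, and $\beta_a$ the confidence width), and the problem is the attacker's problem of finding the smallest perturbation $y$ of a target user's context $x^\dagger$ making arm $a^\dagger$ have the highest upper confidence bound by a margin $\xi$. *)

theory Defs
  imports "HOL-Analysis.Analysis"
begin

definition Vnorm :: "real^'d^'d \<Rightarrow> real^'d \<Rightarrow> real" where
  "Vnorm V x = sqrt (x \<bullet> (V *v x))"

definition pos_def_mat :: "real^'d^'d \<Rightarrow> bool" where
  "pos_def_mat V \<longleftrightarrow> transpose V = V \<and> (\<forall>x. x \<noteq> 0 \<longrightarrow> x \<bullet> (V *v x) > 0)"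

definition ellipsoid :: "real^'d \<Rightarrow> real^'d^'d \<Rightarrow> real \<Rightarrow> (real^'d) set" where
  "ellipsoid th V b = {\<theta>. Vnorm V (\<theta> - th) \<le> b}"

end

theory Submission
  imports Defs
begin

text \<open>Both directions are about support functions of compact sets. If in direction z the
support value of every other arm's ellipsoid is at least \<xi> below that of the target ellipsoid,
a point of the target ellipsoid nearly attaining its support value lies strictly beyond a
half-space containing the union, hence outside its convex hull. Conversely the convex hull of
finitely many compact sets is compact, so a point outside it is strictly separated by a
hyperplane, and scaling the normal makes the gap as large as \<xi>. Translating by the context
turns directions z into perturbations y.\<close>

lemma pos_def_mat_quadratic_form_lower_bound:
  fixes V :: "real^'d^'d"
  assumes "pos_def_mat V"
  obtains m where "m > 0" "\<And>x. m * (norm x)\<^sup>2 \<le> x \<bullet> (V *v x)"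
proof -
  have "sphere (0::real^'d) 1 \<noteq> {}" by (simp add: sphere_eq_empty)
  moreover have "continuous_on (sphere (0::real^'d) 1) (\<lambda>x. x \<bullet> (V *v x))"
    by (intro continuous_intros)
  ultimately obtain u where u: "u \<in> sphere 0 1"
    and u_min: "\<And>w. w \<in> sphere 0 1 \<Longrightarrow> u \<bullet> (V *v u) \<le> w \<bullet> (V *v w)"
    using continuous_attains_inf[OF compact_sphere] by blast
  have "u \<noteq> 0" using u by auto
  then have "u \<bullet> (V *v u) > 0"
    using assms unfolding pos_def_mat_def by blast
  moreover have "u \<bullet> (V *v u) * (norm x)\<^sup>2 \<le> x \<bullet> (V *v x)" for x :: "real^'d"
  proof (cases "x = 0")
    case False
    define w where "w = (1 / norm x) *\<^sub>R x"
    have "x = norm x *\<^sub>R w" using False by (simp add: w_def)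
    then have "x \<bullet> (V *v x) = (norm x)\<^sup>2 * (w \<bullet> (V *v w))"
      by (metis inner_scaleR_left inner_scaleR_right matrix_vector_mult_scaleR
          power2_eq_square mult.assoc)
    moreover have "u \<bullet> (V *v u) \<le> w \<bullet> (V *v w)"
      using False by (intro u_min) (simp add: w_def)
    ultimately show ?thesis by (simp add: mult_right_mono mult.commute[of "(norm x)\<^sup>2"])
  qed simp
  ultimately show ?thesis using that by blast
qed

lemma closed_ellipsoid:
  fixes V :: "real^'d^'d"
  shows "closed (ellipsoid th V b)"
proof -
  have "continuous_on UNIV (\<lambda>\<theta>::real^'d. V *v (\<theta> - th))"
    by (rule bounded_linear.continuous_on[OF matrix_vector_mul_bounded_linear])
      (intro continuous_intros)
  then show ?thesis
    unfolding ellipsoid_def Vnorm_def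
    by (intro closed_Collect_le continuous_on_inner continuous_intros)
qed

lemma bounded_ellipsoid:
  assumes "pos_def_mat V"
  shows "bounded (ellipsoid th V b)"
proof -
  obtain m where m: "m > 0" "\<And>x. m * (norm x)\<^sup>2 \<le> x \<bullet> (V *v x)"
    using pos_def_mat_quadratic_form_lower_bound[OF assms] by blast
  have "norm (\<theta> - th) \<le> sqrt (b\<^sup>2 / m)" if "\<theta> \<in> ellipsoid th V b" for \<theta>
  proof -
    let ?x = "\<theta> - th"
    have q_nonneg: "0 \<le> ?x \<bullet> (V *v ?x)"
      using m(1) m(2)[of ?x] by (smt (verit) zero_le_mult_iff zero_le_power2)
    have "sqrt (?x \<bullet> (V *v ?x)) \<le> b"
      using that by (simp add: ellipsoid_def Vnorm_def)
    then have "?x \<bullet> (V *v ?x) \<le> b\<^sup>2"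
      using q_nonneg by (metis real_sqrt_ge_zero real_sqrt_pow2 power_mono)
    then have "(norm ?x)\<^sup>2 \<le> b\<^sup>2 / m"
      using m by (simp add: field_simps) (smt (verit) mult.commute)
    then show ?thesis by (simp add: real_le_rsqrt)
  qed
  then show ?thesis
    unfolding bounded_def by (metis dist_norm norm_minus_commute)
qed

lemma compact_ellipsoid: "pos_def_mat V \<Longrightarrow> compact (ellipsoid th V b)"
  using bounded_ellipsoid closed_ellipsoid compact_eq_bounded_closed by blast

lemma ellipsoid_nonempty: "b \<ge> 0 \<Longrightarrow> ellipsoid th V b \<noteq> {}"
  by (auto simp: ellipsoid_def Vnorm_def intro!: exI[of _ th])

lemma bdd_above_inner_compact:
  fixes C :: "'a::euclidean_space set"
  shows "compact C \<Longrightarrow> bdd_above ((\<lambda>\<theta>. z \<bullet> \<theta>) ` C)"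
  by (intro bounded_imp_bdd_above compact_imp_bounded compact_continuous_image continuous_intros)

lemma support_gap_imp_not_in_convex_hull:
  fixes T :: "'a::euclidean_space set" and S :: "'i \<Rightarrow> 'a set"
  assumes "compact T" "T \<noteq> {}" "\<And>a. a \<in> A \<Longrightarrow> compact (S a)" "\<xi> > 0"
    and gap: "\<And>a. a \<in> A \<Longrightarrow> (SUP \<theta>\<in>S a. z \<bullet> \<theta>) + \<xi> \<le> (SUP \<theta>\<in>T. z \<bullet> \<theta>)"
  shows "\<exists>\<theta>\<in>T. \<theta> \<notin> convex hull (\<Union>a\<in>A. S a)"
proof -
  let ?M = "SUP \<theta>\<in>T. z \<bullet> \<theta>"
  have "?M - \<xi> < ?M" using assms(4) by simp
  then obtain \<theta> where \<theta>: "\<theta> \<in> T" "?M - \<xi> < z \<bullet> \<theta>"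
    using less_cSUP_iff[OF assms(2) bdd_above_inner_compact[OF assms(1)]] by blast
  have "u \<in> {u. z \<bullet> u < z \<bullet> \<theta>}" if "a \<in> A" "u \<in> S a" for a u
    using cSUP_upper[OF that(2) bdd_above_inner_compact[OF assms(3)[OF that(1)], of z]]
      gap[OF that(1)] \<theta>(2) by force
  then have "convex hull (\<Union>a\<in>A. S a) \<subseteq> {u. z \<bullet> u < z \<bullet> \<theta>}"
    by (intro hull_minimal convex_halfspace_lt) blast
  then show ?thesis using \<theta>(1) by blast
qed

lemma not_in_convex_hull_imp_support_gap:
  fixes T :: "'a::euclidean_space set" and S :: "'i \<Rightarrow> 'a set"
  assumes "compact T" "finite A" "\<And>a. a \<in> A \<Longrightarrow> compact (S a)"
    "\<And>a. a \<in> A \<Longrightarrow> S a \<noteq> {}" "\<xi> > 0"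
    and \<theta>: "\<theta> \<in> T" "\<theta> \<notin> convex hull (\<Union>a\<in>A. S a)"
  shows "\<exists>z. \<forall>a\<in>A. (SUP u\<in>S a. z \<bullet> u) + \<xi> \<le> (SUP u\<in>T. z \<bullet> u)"
proof -
  have "compact (convex hull (\<Union>a\<in>A. S a))"
    using assms(2,3) by (intro compact_convex_hull compact_UN)
  then obtain c b where c: "c \<bullet> \<theta> < b" "\<And>x. x \<in> convex hull (\<Union>a\<in>A. S a) \<Longrightarrow> b < c \<bullet> x"
    using separating_hyperplane_closed_point[OF convex_convex_hull _ \<theta>(2)] compact_imp_closed
    by blast
  define t where "t = \<xi> / (b - c \<bullet> \<theta>)"
  have "t > 0" using c(1) assms(5) by (simp add: t_def)
  define z where "z = (- t) *\<^sub>R c"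
  have "(SUP u\<in>S a. z \<bullet> u) + \<xi> \<le> (SUP u\<in>T. z \<bullet> u)" if a: "a \<in> A" for a
  proof -
    have "(SUP u\<in>S a. z \<bullet> u) \<le> - t * b"
    proof (rule cSUP_least)
      fix u assume "u \<in> S a"
      then have "b < c \<bullet> u" using a by (intro c(2) hull_inc) blast
      then show "z \<bullet> u \<le> - t * b" using \<open>t > 0\<close> by (simp add: z_def)
    qed (use a assms(4) in blast)
    moreover have "z \<bullet> \<theta> \<le> (SUP u\<in>T. z \<bullet> u)"
      using cSUP_upper[OF \<theta>(1) bdd_above_inner_compact[OF assms(1)]] .
    moreover have "- t * b + \<xi> = z \<bullet> \<theta>"
      using c(1) by (simp add: z_def t_def field_simps)
    ultimately show ?thesis by linarith
  qed
  then show ?thesis by blast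
qed

theorem theorem1:
  fixes K :: nat and adag :: nat
    and thetahat :: "nat \<Rightarrow> real^'d"
    and V :: "nat \<Rightarrow> real^'d^'d"
    and beta :: "nat \<Rightarrow> real"
    and xdag :: "real^'d" and \<xi> :: real
  assumes "CARD('d) \<ge> 2" and "K \<ge> 2"
    and "adag \<in> {1..K}"
    and "\<And>a. a \<in> {1..K} \<Longrightarrow> pos_def_mat (V a)"
    and "\<And>a. a \<in> {1..K} \<Longrightarrow> beta a > 0"
    and "\<xi> > 0"
  shows "(\<exists>y :: real^'d. \<forall>a \<in> {1..K} - {adag}.
            (SUP \<theta>\<in>ellipsoid (thetahat a) (V a) (beta a). (xdag + y) \<bullet> \<theta>) + \<xi>
              \<le> (SUP \<theta>\<in>ellipsoid (thetahat adag) (V adag) (beta adag). (xdag + y) \<bullet> \<theta>))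
     \<longleftrightarrow> (\<exists>\<theta> \<in> ellipsoid (thetahat adag) (V adag) (beta adag).
            \<theta> \<notin> convex hull (\<Union>a \<in> {1..K} - {adag}. ellipsoid (thetahat a) (V a) (beta a)))"
proof -
  define C where "C a = ellipsoid (thetahat a) (V a) (beta a)" for a
  define A where "A = {1..K} - {adag}"
  have compact: "compact (C a)" if "a \<in> {1..K}" for a
    using assms(4)[OF that] compact_ellipsoid unfolding C_def by blast
  have nonempty: "C a \<noteq> {}" if "a \<in> {1..K}" for a
    unfolding C_def by (rule ellipsoid_nonempty) (use assms(5)[OF that] in simp)
  have "(\<exists>y. \<forall>a\<in>A. (SUP \<theta>\<in>C a. (xdag + y) \<bullet> \<theta>) + \<xi> \<le> (SUP \<theta>\<in>C adag. (xdag + y) \<bullet> \<theta>))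
        \<longleftrightarrow> (\<exists>z. \<forall>a\<in>A. (SUP \<theta>\<in>C a. z \<bullet> \<theta>) + \<xi> \<le> (SUP \<theta>\<in>C adag. z \<bullet> \<theta>))"
    by (metis add_minus_cancel)
  also have "\<dots> \<longleftrightarrow> (\<exists>\<theta>\<in>C adag. \<theta> \<notin> convex hull (\<Union>a\<in>A. C a))"
    using support_gap_imp_not_in_convex_hull[of "C adag" A C \<xi>]
      not_in_convex_hull_imp_support_gap[of "C adag" A C \<xi>]
      compact nonempty assms(3,6)
    unfolding A_def by blast
  finally show ?thesis unfolding A_def C_def .
qed

end
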